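(* Let $N\ge2$, let $B=\{(s_k,\tilde s_k)\}_{0\le k<N}$ be a Pauli frame, let $p\in\mathcal P$, and let $i\ne j$ be qubits such that $(\lambda(s_i,p),\lambda(\tilde s_i,p))\ne(0,0)$ and $(\lambda(s_j,p),\lambda(\tilde s_j,p))\ne(0,0)$. For $\sigma,\tau\in\{X,Y,Z\}$ let $C(\sigma,\tau)_{ij}=\tfrac12(I+\sigma_i)+\tfrac12(I-\sigma_i)\tau_j$. Then among the nine gates $C(\sigma,\tau)_{ij}$, exactly four satisfy $\mathrm{Supp}(p,C(\sigma,\tau)_{ij}\cdot B)=\mathrm{Supp}(p,B)-1$, and the other five satisfy $\mathrm{Supp}(p,C(\sigma,\tau)_{ij}\cdot B)=\mathrm{Supp}(p,B)$.
   Context: Pauli space: $\mathcal P$ is the set of $N$-qubit Pauli operators modulo overall phase, an $\mathbb F_2$-vector space with addition given by product (mod phase); $\lambda(p,q)\in\mathbb F_2$ is $0$ if $p,q$ commute and $1$ otherwise. A Pauli frame is an ordered tuple $B=\{(s_k,\tilde s_k)\}_{0\le k<N}$ of elements of $\mathcal P$ with $\lambda(s_k,s_l)=\lambda(\tilde s_k,\tilde s_l)=0$, $\lambda(s_k,\tilde s_l)=\delta_{kl}$. For a frame $B$ let $\phi_B$ be the linear map of $\mathcal P$ with $\phi_B(Z_k)=s_k$, $\phi_B(X_k)=\tilde s_k$. The backward action of a Clifford unitary $V$ on $B$ is $V\cdot B:=\{(\phi_B(V^\dagger Z_kV),\phi_B(V^\dagger X_kV))\}_k$ (mod phase). Relative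 support: $\mathrm{Supp}(p,B)=\sum_k\big(\lambda(s_k,p)\vee\lambda(\tilde s_k,p)\big)$, with $\vee$ the logical OR and the sum over integers. *)

theory Defs
  imports Complex_Main "HOL-Library.Z2"
begin

text \<open>Qubits are indexed by a finite type 'n (N = CARD('n)).
  A Pauli operator modulo phase is represented by its symplectic coordinates
  (x, z) in F_2^N x F_2^N, standing for the operator X^x Z^z
  (tensor product over qubits).\<close>

type_synonym 'n pauli = "('n \<Rightarrow> bit) \<times> ('n \<Rightarrow> bit)"

text \<open>Operators on the N-qubit Hilbert space: complex matrices indexed by
  computational basis states ('n => bool).\<close>

type_synonym 'n op = "('n \<Rightarrow> bool) \<Rightarrow> ('n \<Rightarrow> bool) \<Rightarrow> complex"

definition mmult :: "('n::finite) op \<Rightarrow> 'n op \<Rightarrow> 'n op" where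
  "mmult A B = (\<lambda>a c. \<Sum>b\<in>UNIV. A a b * B b c)"

definition madd :: "'n op \<Rightarrow> 'n op \<Rightarrow> 'n op" where
  "madd A B = (\<lambda>a b. A a b + B a b)"

definition msub :: "'n op \<Rightarrow> 'n op \<Rightarrow> 'n op" where
  "msub A B = (\<lambda>a b. A a b - B a b)"

definition mscale :: "complex \<Rightarrow> 'n op \<Rightarrow> 'n op" where
  "mscale c A = (\<lambda>a b. c * A a b)"

definition mid :: "'n op" where
  "mid = (\<lambda>a b. if a = b then 1 else 0)"

definition madj :: "'n op \<Rightarrow> 'n op" where
  "madj A = (\<lambda>a b. cnj (A b a))"

text \<open>The operator X^x Z^z: it maps basis state |b> to (-1)^(z.b) |b + x>.\<close>

definition Pmat :: "'n pauli \<Rightarrow> 'n op" where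
  "Pmat p = (\<lambda>a b. if a = (\<lambda>k. b k \<noteq> (fst p k = 1))
                   then (-1) ^ card {k. snd p k = 1 \<and> b k} else 0)"

definition lam :: "('n::finite) pauli \<Rightarrow> 'n pauli \<Rightarrow> bit" where
  "lam p q = (if mmult (Pmat p) (Pmat q) = mmult (Pmat q) (Pmat p) then 0 else 1)"

definition pauli_class :: "'n op \<Rightarrow> 'n pauli" where
  "pauli_class M = (SOME p. \<exists>c. c \<noteq> 0 \<and> M = mscale c (Pmat p))"

definition unit_vec :: "'n \<Rightarrow> 'n \<Rightarrow> bit" where
  "unit_vec k = (\<lambda>m. if m = k then 1 else 0)"

definition Xp :: "'n \<Rightarrow> 'n pauli" where "Xp k = (unit_vec k, \<lambda>_. 0)"
definition Zp :: "'n \<Rightarrow> 'n pauli" where "Zp k = (\<lambda>_. 0, unit_vec k)"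

text \<open>A Pauli frame: (s, st) with s k = s_k and st k = tilde s_k.\<close>

type_synonym 'n frame = "('n \<Rightarrow> 'n pauli) \<times> ('n \<Rightarrow> 'n pauli)"

definition is_frame :: "('n::finite) frame \<Rightarrow> bool" where
  "is_frame B = (\<forall>k l. lam (fst B k) (fst B l) = 0 \<and> lam (snd B k) (snd B l) = 0
                       \<and> lam (fst B k) (snd B l) = (if k = l then 1 else 0))"

text \<open>The linear map phi_B with phi_B(Z_k) = s_k and phi_B(X_k) = tilde s_k.\<close>

definition phi :: "('n::finite) frame \<Rightarrow> 'n pauli \<Rightarrow> 'n pauli" where
  "phi B p =
     ((\<lambda>m. \<Sum>k\<in>UNIV. fst p k * fst (snd B k) m + snd p k * fst (fst B k) m),
      (\<lambda>m. \<Sum>k\<in>UNIV. fst p k * snd (snd B k) m + snd p k * snd (fst B k) m))"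

definition back_act :: "('n::finite) op \<Rightarrow> 'n frame \<Rightarrow> 'n frame" where
  "back_act V B =
     ((\<lambda>k. phi B (pauli_class (mmult (madj V) (mmult (Pmat (Zp k)) V)))),
      (\<lambda>k. phi B (pauli_class (mmult (madj V) (mmult (Pmat (Xp k)) V)))))"

definition Supp :: "('n::finite) pauli \<Rightarrow> 'n frame \<Rightarrow> nat" where
  "Supp p B = card {k. lam (fst B k) p = 1 \<or> lam (snd B k) p = 1}"

datatype sigma = SX | SY | SZ

definition sigma_op :: "sigma \<Rightarrow> 'n \<Rightarrow> 'n op" where
  "sigma_op s k = (case s of
       SX \<Rightarrow> Pmat (Xp k)
     | SY \<Rightarrow> mscale \<i> (Pmat (unit_vec k, unit_vec k))
     | SZ \<Rightarrow> Pmat (Zp k))"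

definition Cgate :: "sigma \<Rightarrow> sigma \<Rightarrow> 'n::finite \<Rightarrow> 'n \<Rightarrow> 'n op" where
  "Cgate s t i j =
     madd (mscale (1/2) (madd mid (sigma_op s i)))
          (mmult (mscale (1/2) (msub mid (sigma_op s i))) (sigma_op t j))"

end

theory Submission
  imports Defs "HOL-Library.Product_Plus" "HOL-Library.Function_Algebras"
begin

(* Write S and T for the Pauli operators sigma_i and tau_j. They are commuting self-adjoint
   involutions, so V = C(sigma,tau)_ij = A + B T, with the complementary projectors
   A = (1 + S)/2 and B = (1 - S)/2, is a self-adjoint involution, and conjugating a Pauli
   operator P by V gives P, S P, P T or P S T up to phase according as P commutes or
   anticommutes with S and with T. In symplectic coordinates this reads
   V.P = P + lambda(P, tau_j) sigma_i + lambda(P, sigma_i) tau_j. Since lambda(phi_B u, p) is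
   linear in u, the frame V.B has the same commutation data with p as B away from the qubits i
   and j, and the change of the relative support depends only on sigma, tau and the four bits
   lambda(s_i,p), lambda(tilde s_i,p), lambda(s_j,p), lambda(tilde s_j,p); a finite check over
   these bits and the nine gates gives the counts. *)

(* Keep F_2 arithmetic in ring form, where algebra_simps and the sum lemmas apply. *)
declare add_bit_eq_xor[simp del] mult_bit_eq_and[simp del]

section \<open>Pauli operators as matrices\<close>

definition bit_sign :: "bit \<Rightarrow> complex" where
  "bit_sign b = (if b = 0 then 1 else -1)"

lemma bit_sign_simps [simp]:
  "bit_sign 0 = 1" "bit_sign 1 = -1" "bit_sign b \<noteq> 0" "bit_sign b * bit_sign b = 1"
  by (simp_all add: bit_sign_def)

lemma bit_sign_add: "bit_sign (a + b) = bit_sign a * bit_sign b"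
  by (cases a; cases b) (simp_all add: bit_sign_def)

lemma bit_sign_eq_iff: "bit_sign a = bit_sign b \<longleftrightarrow> a = b"
  by (cases a; cases b) (simp_all add: bit_sign_def)

lemma cnj_bit_sign [simp]: "cnj (bit_sign b) = bit_sign b"
  by (cases b) (simp_all add: bit_sign_def)

lemma power_minus_one_eq_bit_sign: "(-1::complex) ^ n = bit_sign (of_nat n)"
  by (induction n) (simp_all add: bit_sign_add)

lemma of_nat_card_eq_sum_of_bool:
  "(of_nat (card {k. P k}) :: bit) = (\<Sum>k\<in>(UNIV::'n::finite set). of_bool (P k))"
proof -
  have "(\<Sum>k\<in>(UNIV::'n set). (of_bool (P k)::bit)) = (\<Sum>k\<in>{k. P k}. 1)"
    by (simp add: sum.If_cases of_bool_def)
  then show ?thesis by simp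
qed

definition flip :: "('n \<Rightarrow> bool) \<Rightarrow> ('n \<Rightarrow> bit) \<Rightarrow> 'n \<Rightarrow> bool" where
  "flip b x = (\<lambda>k. b k \<noteq> (x k = 1))"

definition bit_dot :: "('n::finite \<Rightarrow> bit) \<Rightarrow> ('n \<Rightarrow> bool) \<Rightarrow> bit" where
  "bit_dot z b = (\<Sum>k\<in>UNIV. z k * of_bool (b k))"

lemma flip_flip: "flip (flip b x) y = flip b (x + y)"
  unfolding flip_def by (rule ext) (case_tac "x k"; case_tac "y k"; simp)

lemma flip_eq_iff: "a = flip b x \<longleftrightarrow> b = flip a x"
  unfolding flip_def by (auto simp: fun_eq_iff)

lemma bit_dot_flip: "bit_dot z (flip b x) = bit_dot z b + (\<Sum>k\<in>UNIV. z k * x k)"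
proof -
  have "(of_bool (flip b x k) :: bit) = of_bool (b k) + x k" for k
    unfolding flip_def by (cases "x k"; cases "b k"; simp)
  then show ?thesis
    unfolding bit_dot_def by (simp add: distrib_left sum.distrib)
qed

lemma bit_dot_add: "bit_dot (z + w) b = bit_dot z b + bit_dot w b"
  unfolding bit_dot_def by (simp add: distrib_right sum.distrib)

lemma bit_dot_zero [simp]: "bit_dot z (\<lambda>_. False) = 0"
  by (simp add: bit_dot_def)

lemma bit_dot_single: "bit_dot z (\<lambda>m. m = k) = z k"
proof -
  have "bit_dot z (\<lambda>m. m = k) = (\<Sum>m\<in>UNIV. if m = k then z k else 0)"
    unfolding bit_dot_def by (rule sum.cong) auto
  then show ?thesis by simp
qed

lemma Pmat_eq:
  "Pmat p = (\<lambda>a b. if a = flip b (fst p) then bit_sign (bit_dot (snd p) b) else 0)"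
proof -
  have "(-1::complex) ^ card {k. snd p k = 1 \<and> b k} = bit_sign (bit_dot (snd p) b)" for b
  proof -
    have "(of_bool (snd p k = 1 \<and> b k) :: bit) = snd p k * of_bool (b k)" for k
      by (cases "snd p k") auto
    then show ?thesis
      by (simp add: power_minus_one_eq_bit_sign of_nat_card_eq_sum_of_bool bit_dot_def)
  qed
  then show ?thesis
    unfolding Pmat_def flip_def by (auto intro!: ext)
qed

lemma Pmat_diag: "Pmat p (flip b (fst p)) b = bit_sign (bit_dot (snd p) b)"
  by (simp add: Pmat_eq)

definition zx_form :: "('n::finite) pauli \<Rightarrow> 'n pauli \<Rightarrow> bit" where
  "zx_form p q = (\<Sum>k\<in>UNIV. snd p k * fst q k)"

lemma sum_if_eq_mult: "(\<Sum>b\<in>UNIV. f b * (if b = d then g else 0)) = f (d::'a::finite) * (g::complex)"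
proof -
  have "(\<Sum>b\<in>UNIV. f b * (if b = d then g else 0)) = (\<Sum>b\<in>UNIV. if b = d then f b * g else 0)"
    by (rule sum.cong) auto
  then show ?thesis by simp
qed

lemma Pmat_mult:
  "mmult (Pmat p) (Pmat q) = mscale (bit_sign (zx_form p q)) (Pmat (p + q))"
proof (intro ext)
  fix a c
  have "mmult (Pmat p) (Pmat q) a c =
      (\<Sum>b\<in>UNIV. (if a = flip b (fst p) then bit_sign (bit_dot (snd p) b) else 0) *
                  (if b = flip c (fst q) then bit_sign (bit_dot (snd q) c) else 0))"
    unfolding mmult_def Pmat_eq by simp
  also have "\<dots> = (if a = flip (flip c (fst q)) (fst p)
                   then bit_sign (bit_dot (snd p) (flip c (fst q))) else 0) * bit_sign (bit_dot (snd q) c)"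
    by (rule sum_if_eq_mult)
  also have "\<dots> = mscale (bit_sign (zx_form p q)) (Pmat (p + q)) a c"
    unfolding mscale_def Pmat_eq flip_flip bit_dot_flip zx_form_def
    by (simp add: bit_sign_add add.commute bit_dot_add)
  finally show "mmult (Pmat p) (Pmat q) a c = mscale (bit_sign (zx_form p q)) (Pmat (p + q)) a c" .
qed

lemma pauli_add_self: "(p::('n::finite) pauli) + p = 0"
  by (auto simp: prod_eq_iff fun_eq_iff)

lemma Pmat_zero: "Pmat (0::('n::finite) pauli) = mid"
  by (intro ext) (simp add: Pmat_eq mid_def flip_def bit_dot_def)

lemma madj_Pmat: "madj (Pmat p) = mscale (bit_sign (zx_form p p)) (Pmat p)"
proof (intro ext)
  fix a b
  show "madj (Pmat p) a b = mscale (bit_sign (zx_form p p)) (Pmat p) a b"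
  proof (cases "a = flip b (fst p)")
    case True
    have "flip (flip b (fst p)) (fst p) = b"
      unfolding flip_def by (auto simp: fun_eq_iff)
    then show ?thesis
      by (simp add: True madj_def mscale_def Pmat_eq bit_dot_flip bit_sign_add zx_form_def)
  next
    case False
    then have "b \<noteq> flip a (fst p)" using flip_eq_iff by blast
    then show ?thesis
      using False by (simp add: madj_def mscale_def Pmat_eq)
  qed
qed

lemma Pmat_nonzero: "Pmat (p::('n::finite) pauli) \<noteq> (\<lambda>a b. 0)"
proof
  assume "Pmat p = (\<lambda>a b. 0)"
  then have "Pmat p (flip (\<lambda>_. False) (fst p)) (\<lambda>_. False) = 0" by simp
  then show False by (simp add: Pmat_diag)
qed

lemma lam_eq_zx_form: "lam p q = zx_form p q + zx_form q p"
proof -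
  have cancel: "c = d" if "mscale c (Pmat (p + q)) = mscale d (Pmat (p + q))" for c d
  proof -
    obtain a b where "Pmat (p + q) a b \<noteq> 0" using Pmat_nonzero by meson
    moreover have "c * Pmat (p + q) a b = d * Pmat (p + q) a b"
      using fun_cong[OF fun_cong[OF that, of a], of b] by (simp only: mscale_def)
    ultimately show ?thesis by simp
  qed
  have "mmult (Pmat p) (Pmat q) = mmult (Pmat q) (Pmat p) \<longleftrightarrow> zx_form p q = zx_form q p"
    unfolding Pmat_mult add.commute[of q p] by (metis cancel bit_sign_eq_iff)
  then show ?thesis
    unfolding lam_def by (cases "zx_form p q"; cases "zx_form q p") auto
qed

lemma Pmat_commute:
  "mmult (Pmat p) (Pmat q) = mscale (bit_sign (lam p q)) (mmult (Pmat q) (Pmat p))"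
proof -
  have "bit_sign (zx_form p q) = bit_sign (lam p q) * bit_sign (zx_form q p)"
    by (simp add: lam_eq_zx_form bit_sign_add mult.assoc)
  then show ?thesis
    by (simp add: Pmat_mult mscale_def add.commute[of q p] mult.assoc)
qed

lemma Pmat_scaled_inj:
  fixes p q :: "('n::finite) pauli"
  assumes "c \<noteq> 0" and eq: "mscale c (Pmat p) = mscale d (Pmat q)"
  shows "p = q"
proof -
  have entries: "c * Pmat p a b = d * Pmat q a b" for a b
    using fun_cong[OF fun_cong[OF eq, of a], of b] by (simp only: mscale_def)
  let ?o = "\<lambda>_::'n. False"
  have "Pmat q (flip ?o (fst p)) ?o \<noteq> 0"
    using entries[of "flip ?o (fst p)" ?o] \<open>c \<noteq> 0\<close> by (auto simp: Pmat_diag)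
  then have flips: "flip ?o (fst p) = flip ?o (fst q)"
    by (simp add: Pmat_eq split: if_splits)
  have x: "fst p = fst q"
  proof
    fix k show "fst p k = fst q k"
      using fun_cong[OF flips, of k] by (cases "fst p k"; cases "fst q k") (simp_all add: flip_def)
  qed
  have z: "c * bit_sign (bit_dot (snd p) b) = d * bit_sign (bit_dot (snd q) b)" for b
    using entries[of "flip b (fst p)" b] by (metis Pmat_diag x)
  have "c = d" using z[of ?o] by simp
  have "snd p k = snd q k" for k
    using z[of "\<lambda>m. m = k"] \<open>c \<noteq> 0\<close> \<open>c = d\<close> by (simp add: bit_dot_single bit_sign_eq_iff)
  with x show ?thesis by (simp add: prod_eq_iff fun_eq_iff)
qed

lemma pauli_class_mscale: "c \<noteq> 0 \<Longrightarrow> pauli_class (mscale c (Pmat p)) = (p::('n::finite) pauli)"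
  unfolding pauli_class_def by (rule some_equality) (use Pmat_scaled_inj in blast)+

section \<open>The operator algebra\<close>

(* A copy of the type op, which as a function type already carries the pointwise algebra. *)
typedef ('n::finite) operator = "UNIV :: 'n op set" by simp

setup_lifting type_definition_operator

lemma mmult_assoc: "mmult (mmult A B) C = mmult A (mmult B (C::('n::finite) op))"
proof (intro ext)
  fix a d
  have "mmult (mmult A B) C a d = (\<Sum>c\<in>UNIV. \<Sum>b\<in>UNIV. A a b * B b c * C c d)"
    by (simp add: mmult_def sum_distrib_right)
  also have "\<dots> = (\<Sum>b\<in>UNIV. \<Sum>c\<in>UNIV. A a b * B b c * C c d)"
    by (rule sum.swap)
  also have "\<dots> = mmult A (mmult B C) a d"
    by (simp add: mmult_def sum_distrib_left mult.assoc)
  finally show "mmult (mmult A B) C a d = mmult A (mmult B C) a d" .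
qed

lemma mmult_mid_left: "mmult mid A = (A::('n::finite) op)"
proof (intro ext)
  fix a c
  have "mmult mid A a c = (\<Sum>b\<in>UNIV. if b = a then A b c else 0)"
    unfolding mmult_def mid_def by (rule sum.cong) auto
  then show "mmult mid A a c = A a c" by simp
qed

lemma mmult_mid_right: "mmult A mid = (A::('n::finite) op)"
proof (intro ext)
  fix a c
  have "mmult A mid a c = (\<Sum>b\<in>UNIV. if b = c then A a b else 0)"
    unfolding mmult_def mid_def by (rule sum.cong) auto
  then show "mmult A mid a c = A a c" by simp
qed

lemma mid_nonzero: "mid \<noteq> (\<lambda>a b. 0)"
  by (metis mid_def zero_neq_one)

instantiation operator :: (finite) real_algebra_1
begin

lift_definition zero_operator :: "'a operator" is "\<lambda>a b. 0" .
lift_definition one_operator :: "'a operator" is mid .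
lift_definition plus_operator :: "'a operator \<Rightarrow> 'a operator \<Rightarrow> 'a operator" is madd .
lift_definition minus_operator :: "'a operator \<Rightarrow> 'a operator \<Rightarrow> 'a operator" is msub .
lift_definition uminus_operator :: "'a operator \<Rightarrow> 'a operator" is "mscale (-1)" .
lift_definition times_operator :: "'a operator \<Rightarrow> 'a operator \<Rightarrow> 'a operator" is mmult .
lift_definition scaleR_operator :: "real \<Rightarrow> 'a operator \<Rightarrow> 'a operator"
  is "\<lambda>r. mscale (complex_of_real r)" .

instance
proof
  fix a b c :: "'a operator" and r s :: real
  show "a + b + c = a + (b + c)" by transfer (simp add: madd_def add.assoc)
  show "a + b = b + a" by transfer (simp add: madd_def add.commute)
  show "0 + a = a" by transfer (simp add: madd_def)
  show "- a + a = 0" by transfer (simp add: madd_def mscale_def)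
  show "a - b = a + - b" by transfer (simp add: madd_def msub_def mscale_def)
  show "r *\<^sub>R (a + b) = r *\<^sub>R a + r *\<^sub>R b"
    by transfer (simp add: madd_def mscale_def distrib_left)
  show "(r + s) *\<^sub>R a = r *\<^sub>R a + s *\<^sub>R a"
    by transfer (simp add: madd_def mscale_def distrib_right)
  show "r *\<^sub>R s *\<^sub>R a = (r * s) *\<^sub>R a" by transfer (simp add: mscale_def mult.assoc)
  show "1 *\<^sub>R a = a" by transfer (simp add: mscale_def)
  show "a * b * c = a * (b * c)" by transfer (rule mmult_assoc)
  show "(a + b) * c = a * c + b * c"
    by transfer (simp add: mmult_def madd_def distrib_right sum.distrib)
  show "a * (b + c) = a * b + a * c"
    by transfer (simp add: mmult_def madd_def distrib_left sum.distrib)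
  show "1 * a = a" by transfer (rule mmult_mid_left)
  show "a * 1 = a" by transfer (rule mmult_mid_right)
  show "r *\<^sub>R a * b = r *\<^sub>R (a * b)"
    by transfer (simp add: mmult_def mscale_def sum_distrib_left mult.assoc)
  show "a * r *\<^sub>R b = r *\<^sub>R (a * b)"
    by transfer (simp add: mmult_def mscale_def sum_distrib_left mult.left_commute)
  show "(0::'a operator) \<noteq> 1" by transfer (use mid_nonzero in metis)
qed

end

lift_definition adj :: "('n::finite) operator \<Rightarrow> 'n operator" is madj .

lemma adj_add: "adj (x + y) = adj x + adj y"
  by transfer (simp add: madj_def madd_def)

lemma adj_diff: "adj (x - y) = adj x - adj y"
  by transfer (simp add: madj_def msub_def)

lemma adj_mult: "adj (x * y) = adj y * adj x"
  by transfer (simp add: madj_def mmult_def mult.commute)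

lemma adj_one: "adj 1 = 1"
  by transfer (simp add: madj_def mid_def fun_eq_iff)

lemma adj_scaleR: "adj (r *\<^sub>R x) = r *\<^sub>R adj x"
  by transfer (simp add: madj_def mscale_def)

lemma mmult_mscale_left: "mmult (mscale c A) B = mscale c (mmult A (B::('n::finite) op))"
  by (simp add: mmult_def mscale_def sum_distrib_left mult.assoc)

lemma mmult_mscale_right: "mmult A (mscale c B) = mscale c (mmult A (B::('n::finite) op))"
  by (simp add: mmult_def mscale_def sum_distrib_left mult.left_commute)

lemma mscale_mscale: "mscale c (mscale d A) = mscale (c * d) A"
  by (simp add: mscale_def mult.assoc)

lemma mscale_one: "mscale 1 A = A"
  by (simp add: mscale_def)

lemma madj_mscale: "madj (mscale c A) = mscale (cnj c) (madj A)"
  by (simp add: madj_def mscale_def)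

definition pauli_multiple :: "('n::finite) operator \<Rightarrow> 'n pauli \<Rightarrow> bool" where
  "pauli_multiple x p \<longleftrightarrow> (\<exists>c. c \<noteq> 0 \<and> Rep_operator x = mscale c (Pmat p))"

lemma pauli_multiple_Pmat: "pauli_multiple (Abs_operator (Pmat p)) p"
  unfolding pauli_multiple_def by (rule exI[of _ 1]) (simp add: Abs_operator_inverse mscale_one)

lemma pauli_multiple_mult:
  assumes "pauli_multiple x p" "pauli_multiple y q"
  shows "pauli_multiple (x * y) (p + q)"
proof -
  obtain c d where "c \<noteq> 0" "Rep_operator x = mscale c (Pmat p)"
    and "d \<noteq> 0" "Rep_operator y = mscale d (Pmat q)"
    using assms unfolding pauli_multiple_def by blast
  then have "Rep_operator (x * y) = mscale (c * d * bit_sign (zx_form p q)) (Pmat (p + q))"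
    by (simp add: times_operator.rep_eq mmult_mscale_left mmult_mscale_right Pmat_mult
        mscale_mscale mult_ac)
  with \<open>c \<noteq> 0\<close> \<open>d \<noteq> 0\<close> show ?thesis
    unfolding pauli_multiple_def by (intro exI[of _ "c * d * bit_sign (zx_form p q)"]) simp
qed

lemma pauli_multiple_uminus: "pauli_multiple x p \<Longrightarrow> pauli_multiple (- x) p"
  unfolding pauli_multiple_def
  by (metis uminus_operator.rep_eq mscale_mscale neg_equal_0_iff_equal mult_minus1)

lemma pauli_multiple_commute:
  assumes "pauli_multiple x p" "pauli_multiple y q"
  shows "x * y = (if lam p q = 0 then y * x else - (y * x))"
proof -
  obtain c d where x: "Rep_operator x = mscale c (Pmat p)" and y: "Rep_operator y = mscale d (Pmat q)"
    using assms unfolding pauli_multiple_def by blast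
  have rep: "Rep_operator (x * y) = mscale (bit_sign (lam p q)) (Rep_operator (y * x))"
    unfolding times_operator.rep_eq x y mmult_mscale_left mmult_mscale_right Pmat_commute[of p q]
    by (simp add: mscale_mscale mult_ac)
  consider "lam p q = 0" | "lam p q = 1" by (metis bit_not_zero_iff)
  then show ?thesis
  proof cases
    case 1
    with rep have "Rep_operator (x * y) = Rep_operator (y * x)" by (simp add: mscale_one)
    with 1 show ?thesis by (simp add: Rep_operator_inject)
  next
    case 2
    with rep have "Rep_operator (x * y) = Rep_operator (- (y * x))"
      by (simp add: uminus_operator.rep_eq)
    with 2 show ?thesis by (simp add: Rep_operator_inject)
  qed
qed

lemma pauli_class_pauli_multiple:
  "pauli_multiple x p \<Longrightarrow> pauli_class (Rep_operator x) = p"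
  unfolding pauli_multiple_def by (auto simp: pauli_class_mscale)

section \<open>Controlled gates\<close>

definition ctrl :: "'a::real_algebra_1 \<Rightarrow> 'a \<Rightarrow> 'a" where
  "ctrl S T = (1/2) *\<^sub>R (1 + S) + (1/2) *\<^sub>R (1 - S) * T"

(* Makes a product identity usable inside the right-nested products of algebra_simps. *)
lemma mult_eq_mult_assoc: "(x::'a::ring_1) * y = z \<Longrightarrow> x * (y * w) = z * w"
  by (simp add: mult.assoc[symmetric])

locale commuting_involutions =
  fixes S T :: "'a::real_algebra_1"
  assumes S_squared: "S * S = 1" and T_squared: "T * T = 1" and commute: "S * T = T * S"
begin

definition proj_pos :: 'a where "proj_pos = (1/2) *\<^sub>R (1 + S)"
definition proj_neg :: 'a where "proj_neg = (1/2) *\<^sub>R (1 - S)"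

lemma ctrl_eq: "ctrl S T = proj_pos + proj_neg * T"
  by (simp add: ctrl_def proj_pos_def proj_neg_def)

lemma proj_pos_idem: "proj_pos * proj_pos = proj_pos"
proof -
  have "(1 + S) * (1 + S) = 2 *\<^sub>R (1 + S)"
    by (simp add: algebra_simps S_squared scaleR_2)
  then show ?thesis by (simp add: proj_pos_def)
qed

lemma proj_neg_idem: "proj_neg * proj_neg = proj_neg"
proof -
  have "(1 - S) * (1 - S) = 2 *\<^sub>R (1 - S)"
    by (simp add: algebra_simps S_squared scaleR_2)
  then show ?thesis by (simp add: proj_neg_def)
qed

lemma proj_pos_neg: "proj_pos * proj_neg = 0" and proj_neg_pos: "proj_neg * proj_pos = 0"
  by (simp_all add: proj_pos_def proj_neg_def algebra_simps S_squared)

lemma proj_pos_plus_neg: "proj_pos + proj_neg = 1"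
proof -
  have "proj_pos + proj_neg = (1/2) *\<^sub>R ((1 + S) + (1 - S))"
    by (simp only: proj_pos_def proj_neg_def scaleR_add_right)
  also have "(1 + S) + (1 - S) = 2 *\<^sub>R (1::'a)" by (simp add: scaleR_2)
  finally show ?thesis by simp
qed

lemma proj_pos_minus_neg: "proj_pos - proj_neg = S"
proof -
  have "(1 + S) - (1 - S) = 2 *\<^sub>R S" by (simp add: scaleR_2)
  then show ?thesis by (simp add: proj_pos_def proj_neg_def scaleR_diff_right[symmetric])
qed

lemma T_proj_pos: "T * proj_pos = proj_pos * T" and T_proj_neg: "T * proj_neg = proj_neg * T"
  by (simp_all add: proj_pos_def proj_neg_def algebra_simps commute)

lemmas proj_rules =
  proj_pos_idem proj_neg_idem proj_pos_neg proj_neg_pos T_proj_pos T_proj_neg T_squared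
  proj_pos_idem[THEN mult_eq_mult_assoc] proj_neg_idem[THEN mult_eq_mult_assoc]
  proj_pos_neg[THEN mult_eq_mult_assoc] proj_neg_pos[THEN mult_eq_mult_assoc]
  T_proj_pos[THEN mult_eq_mult_assoc] T_proj_neg[THEN mult_eq_mult_assoc]
  T_squared[THEN mult_eq_mult_assoc]

lemma ctrl_squared: "ctrl S T * ctrl S T = 1"
proof -
  have "ctrl S T * ctrl S T = proj_pos + proj_neg * (T * T)"
    by (simp add: ctrl_eq algebra_simps proj_rules)
  then show ?thesis by (simp add: T_squared proj_pos_plus_neg)
qed

lemma ctrl_conj_comm_comm:
  assumes "P * S = S * P" "P * T = T * P"
  shows "ctrl S T * (P * ctrl S T) = P"
proof -
  have PB: "P * proj_neg = proj_neg * P"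
    using assms(1) by (simp add: proj_neg_def algebra_simps)
  have "P * ctrl S T = ctrl S T * P"
    using assms PB by (simp add: ctrl_eq proj_pos_def algebra_simps PB[THEN mult_eq_mult_assoc])
  then show ?thesis by (simp add: mult.assoc[symmetric] ctrl_squared)
qed

lemma ctrl_conj_comm_anti:
  assumes "P * S = S * P" "P * T = - (T * P)"
  shows "ctrl S T * (P * ctrl S T) = S * P"
proof -
  have PB: "P * proj_neg = proj_neg * P"
    using assms(1) by (simp add: proj_neg_def algebra_simps)
  have "P * ctrl S T = (proj_pos - proj_neg * T) * P"
    using assms PB by (simp add: ctrl_eq proj_pos_def algebra_simps PB[THEN mult_eq_mult_assoc])
  then have "ctrl S T * (P * ctrl S T) = (proj_pos + proj_neg * T) * (proj_pos - proj_neg * T) * P"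
    by (simp add: ctrl_eq mult.assoc)
  also have "(proj_pos + proj_neg * T) * (proj_pos - proj_neg * T) = proj_pos - proj_neg * (T * T)"
    by (simp add: algebra_simps proj_rules)
  finally show ?thesis by (simp add: T_squared proj_pos_minus_neg)
qed

lemma ctrl_conj_anti_comm:
  assumes "P * S = - (S * P)" "P * T = T * P"
  shows "ctrl S T * (P * ctrl S T) = P * T"
proof -
  have PB: "P * proj_neg = proj_pos * P" and PA: "P * proj_pos = proj_neg * P"
    using assms(1) by (simp_all add: proj_pos_def proj_neg_def algebra_simps)
  have "P * ctrl S T = (proj_neg + proj_pos * T) * P"
    using assms PA PB by (simp add: ctrl_eq algebra_simps PB[THEN mult_eq_mult_assoc])
  then have "ctrl S T * (P * ctrl S T) = (proj_pos + proj_neg * T) * (proj_neg + proj_pos * T) * P"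
    by (simp add: ctrl_eq mult.assoc)
  also have "(proj_pos + proj_neg * T) * (proj_neg + proj_pos * T) = (proj_pos + proj_neg) * T"
    by (simp add: algebra_simps proj_rules)
  finally show ?thesis using assms(2) by (simp add: proj_pos_plus_neg)
qed

lemma ctrl_conj_anti_anti:
  assumes "P * S = - (S * P)" "P * T = - (T * P)"
  shows "ctrl S T * (P * ctrl S T) = - (P * (S * T))"
proof -
  have PB: "P * proj_neg = proj_pos * P" and PA: "P * proj_pos = proj_neg * P"
    using assms(1) by (simp_all add: proj_pos_def proj_neg_def algebra_simps)
  have "P * ctrl S T = (proj_neg - proj_pos * T) * P"
    using assms PA PB by (simp add: ctrl_eq algebra_simps PB[THEN mult_eq_mult_assoc])
  then have "ctrl S T * (P * ctrl S T) = (proj_pos + proj_neg * T) * (proj_neg - proj_pos * T) * P"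
    by (simp add: ctrl_eq mult.assoc)
  also have "(proj_pos + proj_neg * T) * (proj_neg - proj_pos * T) = (proj_neg - proj_pos) * T"
    by (simp add: algebra_simps proj_rules)
  also have "proj_neg - proj_pos = - S"
    using proj_pos_minus_neg by (simp add: algebra_simps)
  also have "- S * T * P = - (P * (S * T))"
  proof -
    have "P * (S * T) = - (S * (P * T))" using assms(1) by (simp add: mult.assoc[symmetric])
    also have "\<dots> = S * T * P" using assms(2) by (simp add: mult.assoc)
    finally show ?thesis by simp
  qed
  finally show ?thesis .
qed

end

lemma adj_ctrl:
  assumes "adj S = S" "adj T = T" "S * T = T * S"
  shows "adj (ctrl S T) = ctrl S T"
proof -
  have "adj (ctrl S T) = (1/2) *\<^sub>R (1 + S) + T * ((1/2) *\<^sub>R (1 - S))"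
    by (simp add: ctrl_def adj_add adj_diff adj_mult adj_scaleR adj_one assms(1,2))
  also have "T * ((1/2) *\<^sub>R (1 - S)) = (1/2) *\<^sub>R (1 - S) * T"
    using assms(3) by (simp add: algebra_simps)
  finally show ?thesis by (simp add: ctrl_def)
qed

lemma pauli_multiple_ctrl_conj:
  assumes P: "pauli_multiple P p" and S: "pauli_multiple S \<sigma>" and T: "pauli_multiple T \<tau>"
    and "commuting_involutions S T"
  shows "pauli_multiple (ctrl S T * (P * ctrl S T))
           (p + (if lam p \<tau> = 1 then \<sigma> else 0) + (if lam p \<sigma> = 1 then \<tau> else 0))"
proof -
  interpret commuting_involutions S T by fact
  have PS: "P * S = (if lam p \<sigma> = 0 then S * P else - (S * P))"
    using P S by (rule pauli_multiple_commute)
  have PT: "P * T = (if lam p \<tau> = 0 then T * P else - (T * P))"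
    using P T by (rule pauli_multiple_commute)
  consider "lam p \<sigma> = 0" "lam p \<tau> = 0" | "lam p \<sigma> = 0" "lam p \<tau> = 1"
    | "lam p \<sigma> = 1" "lam p \<tau> = 0" | "lam p \<sigma> = 1" "lam p \<tau> = 1"
    by (metis bit_not_zero_iff)
  then show ?thesis
  proof cases
    case 1
    then show ?thesis using P PS PT ctrl_conj_comm_comm by simp
  next
    case 2
    then show ?thesis using S P PS PT ctrl_conj_comm_anti
      by (simp add: pauli_multiple_mult add.commute)
  next
    case 3
    then show ?thesis using P T PS PT ctrl_conj_anti_comm
      by (simp add: pauli_multiple_mult add.commute)
  next
    case 4
    then show ?thesis using P S T PS PT ctrl_conj_anti_anti
      by (simp add: pauli_multiple_mult pauli_multiple_uminus add.assoc)
  qed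
qed

section \<open>The gates C(sigma, tau)\<close>

primrec sigma_x :: "sigma \<Rightarrow> bit" where
  "sigma_x SX = 1" | "sigma_x SY = 1" | "sigma_x SZ = 0"

primrec sigma_z :: "sigma \<Rightarrow> bit" where
  "sigma_z SX = 0" | "sigma_z SY = 1" | "sigma_z SZ = 1"

definition sigma_pauli :: "sigma \<Rightarrow> 'n \<Rightarrow> 'n pauli" where
  "sigma_pauli s k = (\<lambda>m. if m = k then sigma_x s else 0, \<lambda>m. if m = k then sigma_z s else 0)"

definition sigma_phase :: "sigma \<Rightarrow> complex" where
  "sigma_phase s = (if s = SY then \<i> else 1)"

lemma sigma_op_eq: "sigma_op s k = mscale (sigma_phase s) (Pmat (sigma_pauli s k))"
  by (cases s) (simp_all add: sigma_op_def sigma_phase_def sigma_pauli_def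
      Xp_def Zp_def unit_vec_def mscale_one cong: if_cong)

lemma zx_form_sigma_pauli:
  "zx_form (sigma_pauli s i) (sigma_pauli t j) = (if i = j then sigma_z s * sigma_x t else 0)"
proof -
  have "zx_form (sigma_pauli s i) (sigma_pauli t j) =
      (\<Sum>m\<in>UNIV. if m = i then (if i = j then sigma_z s * sigma_x t else 0) else 0)"
    unfolding zx_form_def sigma_pauli_def by (rule sum.cong) auto
  then show ?thesis by simp
qed

lemma lam_sigma_pauli_distinct: "i \<noteq> j \<Longrightarrow> lam (sigma_pauli s i) (sigma_pauli t j) = 0"
  by (simp add: lam_eq_zx_form zx_form_sigma_pauli)

lemma sigma_op_squared: "mmult (sigma_op s k) (sigma_op s (k::'n::finite)) = mid"
proof -
  have "sigma_phase s * (sigma_phase s * bit_sign (zx_form (sigma_pauli s k) (sigma_pauli s k))) = 1"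
    by (cases s) (simp_all add: sigma_phase_def zx_form_sigma_pauli)
  then show ?thesis
    by (simp add: sigma_op_eq mmult_mscale_left mmult_mscale_right Pmat_mult mscale_mscale
        pauli_add_self Pmat_zero mscale_one)
qed

lemma madj_sigma_op: "madj (sigma_op s k) = sigma_op s (k::'n::finite)"
proof -
  have "cnj (sigma_phase s) * bit_sign (zx_form (sigma_pauli s k) (sigma_pauli s k)) = sigma_phase s"
    by (cases s) (simp_all add: sigma_phase_def zx_form_sigma_pauli)
  then show ?thesis
    by (simp add: sigma_op_eq madj_mscale madj_Pmat mscale_mscale)
qed

lift_definition sigma_operator :: "sigma \<Rightarrow> ('n::finite) \<Rightarrow> 'n operator" is sigma_op .

lemma pauli_multiple_sigma_operator: "pauli_multiple (sigma_operator s k) (sigma_pauli s k)"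
  unfolding pauli_multiple_def sigma_operator.rep_eq sigma_op_eq
  by (intro exI[of _ "sigma_phase s"]) (simp add: sigma_phase_def)

lemma sigma_operator_squared: "sigma_operator s k * sigma_operator s k = 1"
  by transfer (rule sigma_op_squared)

lemma adj_sigma_operator: "adj (sigma_operator s k) = sigma_operator s k"
  by transfer (rule madj_sigma_op)

lemma sigma_operator_commute:
  "i \<noteq> j \<Longrightarrow> sigma_operator s i * sigma_operator t j = sigma_operator t j * sigma_operator s i"
  using pauli_multiple_commute[OF pauli_multiple_sigma_operator[of s i] pauli_multiple_sigma_operator[of t j]]
  by (simp add: lam_sigma_pauli_distinct)

lemma Cgate_eq_ctrl: "Cgate s t i j = Rep_operator (ctrl (sigma_operator s i) (sigma_operator t j))"
  by (simp add: Cgate_def ctrl_def plus_operator.rep_eq times_operator.rep_eq scaleR_operator.rep_eq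
      minus_operator.rep_eq one_operator.rep_eq sigma_operator.rep_eq mmult_mscale_left)

lemma pauli_class_Cgate_conj:
  assumes "i \<noteq> j"
  shows "pauli_class (mmult (madj (Cgate s t i j)) (mmult (Pmat p) (Cgate s t i j)))
       = p + (if lam p (sigma_pauli t j) = 1 then sigma_pauli s i else 0)
           + (if lam p (sigma_pauli s i) = 1 then sigma_pauli t j else 0)"
proof -
  let ?S = "sigma_operator s i" and ?T = "sigma_operator t j"
  have commute: "?S * ?T = ?T * ?S" using assms by (rule sigma_operator_commute)
  have "commuting_involutions ?S ?T"
    by unfold_locales (simp_all add: sigma_operator_squared commute)
  then have "pauli_multiple (ctrl ?S ?T * (Abs_operator (Pmat p) * ctrl ?S ?T))
      (p + (if lam p (sigma_pauli t j) = 1 then sigma_pauli s i else 0)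
         + (if lam p (sigma_pauli s i) = 1 then sigma_pauli t j else 0))"
    by (intro pauli_multiple_ctrl_conj pauli_multiple_Pmat pauli_multiple_sigma_operator)
  moreover have "adj (ctrl ?S ?T) = ctrl ?S ?T"
    by (rule adj_ctrl) (simp_all add: adj_sigma_operator commute)
  then have "mmult (madj (Cgate s t i j)) (mmult (Pmat p) (Cgate s t i j))
      = Rep_operator (ctrl ?S ?T * (Abs_operator (Pmat p) * ctrl ?S ?T))"
    by (metis Cgate_eq_ctrl adj.rep_eq times_operator.rep_eq Abs_operator_inverse UNIV_I)
  ultimately show ?thesis by (simp add: pauli_class_pauli_multiple)
qed

section \<open>Relative support after a gate\<close>

definition frame_lam :: "('n::finite) frame \<Rightarrow> 'n pauli \<Rightarrow> 'n pauli \<Rightarrow> bit" where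
  "frame_lam B p u = (\<Sum>m\<in>UNIV. fst u m * lam (snd B m) p + snd u m * lam (fst B m) p)"

lemma lam_phi: "lam (phi B u) p = frame_lam B p u"
proof -
  define X where "X m k = fst u m * snd (snd B m) k + snd u m * snd (fst B m) k" for m k
  define Y where "Y m k = fst u m * fst (snd B m) k + snd u m * fst (fst B m) k" for m k
  have "lam (phi B u) p = (\<Sum>k\<in>UNIV. (\<Sum>m\<in>UNIV. X m k) * fst p k) + (\<Sum>k\<in>UNIV. snd p k * (\<Sum>m\<in>UNIV. Y m k))"
    by (simp add: lam_eq_zx_form zx_form_def phi_def X_def Y_def)
  also have "\<dots> = (\<Sum>k\<in>UNIV. \<Sum>m\<in>UNIV. X m k * fst p k + snd p k * Y m k)"
    by (simp add: sum_distrib_left sum_distrib_right sum.distrib)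
  also have "\<dots> = (\<Sum>m\<in>UNIV. \<Sum>k\<in>UNIV. X m k * fst p k + snd p k * Y m k)"
    by (rule sum.swap)
  also have "\<dots> = frame_lam B p u"
    unfolding frame_lam_def lam_eq_zx_form zx_form_def
    by (simp add: X_def Y_def sum_distrib_left sum.distrib algebra_simps)
  finally show ?thesis .
qed

lemma frame_lam_add: "frame_lam B p (u + v) = frame_lam B p u + frame_lam B p v"
  by (simp add: frame_lam_def algebra_simps sum.distrib)

lemma frame_lam_if: "frame_lam B p (if b = 1 then u else 0) = b * frame_lam B p u"
  by (cases b) (simp_all add: frame_lam_def)

lemma sum_unit_vec_mult: "(\<Sum>m\<in>UNIV. unit_vec k m * f m) = (f (k::'n::finite) :: bit)"
proof -
  have "(\<Sum>m\<in>UNIV. unit_vec k m * f m) = (\<Sum>m\<in>UNIV. if m = k then f k else 0)"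
    by (rule sum.cong) (auto simp: unit_vec_def)
  then show ?thesis by simp
qed

lemma frame_lam_Zp: "frame_lam B p (Zp k) = lam (fst B k) p"
  by (simp add: frame_lam_def Zp_def sum_unit_vec_mult)

lemma frame_lam_Xp: "frame_lam B p (Xp k) = lam (snd B k) p"
  by (simp add: frame_lam_def Xp_def sum_unit_vec_mult)

lemma frame_lam_sigma_pauli:
  "frame_lam B p (sigma_pauli s k) = sigma_x s * lam (snd B k) p + sigma_z s * lam (fst B k) p"
proof -
  have "frame_lam B p (sigma_pauli s k) =
      (\<Sum>m\<in>UNIV. if m = k then sigma_x s * lam (snd B k) p + sigma_z s * lam (fst B k) p else 0)"
    unfolding frame_lam_def sigma_pauli_def by (rule sum.cong) auto
  then show ?thesis by simp
qed

lemma lam_Zp: "lam (Zp k) v = fst v (k::'n::finite)"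
  by (simp add: lam_eq_zx_form zx_form_def Zp_def mult.commute[of _ "unit_vec k _"] sum_unit_vec_mult)

lemma lam_Xp: "lam (Xp k) v = snd v (k::'n::finite)"
  by (simp add: lam_eq_zx_form zx_form_def Xp_def mult.commute[of "snd v _"] sum_unit_vec_mult)

lemma fst_sigma_pauli: "fst (sigma_pauli s k) m = (if m = k then sigma_x s else 0)"
  and snd_sigma_pauli: "snd (sigma_pauli s k) m = (if m = k then sigma_z s else 0)"
  by (simp_all add: sigma_pauli_def)

lemma lam_back_act_Cgate:
  fixes B :: "('n::finite) frame" and p :: "'n pauli" and s t :: sigma
  assumes "i \<noteq> j"
  defines "Ls \<equiv> frame_lam B p (sigma_pauli s i)" and "Lt \<equiv> frame_lam B p (sigma_pauli t j)"
  shows "lam (fst (back_act (Cgate s t i j) B) k) p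
           = lam (fst B k) p + fst (sigma_pauli t j) k * Ls + fst (sigma_pauli s i) k * Lt"
    and "lam (snd (back_act (Cgate s t i j) B) k) p
           = lam (snd B k) p + snd (sigma_pauli t j) k * Ls + snd (sigma_pauli s i) k * Lt"
  by (simp_all add: back_act_def pauli_class_Cgate_conj[OF assms(1)] lam_phi frame_lam_add
      frame_lam_if lam_Zp lam_Xp frame_lam_Zp frame_lam_Xp Ls_def Lt_def)

lemma card_eq_card_Diff_pair:
  assumes "finite X" "i \<noteq> j"
  shows "card X = card (X - {i, j}) + of_bool (i \<in> X) + of_bool (j \<in> X)"
  using card_Int_Diff[OF assms(1), of "{i, j}"] assms(2) by (simp add: Int_insert_right)

text \<open>The contribution of the qubits i and j to the relative support after the gate, where
  ai = lam(s_i, p), bi = lam(tilde s_i, p), and likewise for j; Ls and Lt are the bits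
  lam(phi_B sigma_i, p) and lam(phi_B tau_j, p).\<close>

definition pair_support :: "bit \<Rightarrow> bit \<Rightarrow> bit \<Rightarrow> bit \<Rightarrow> sigma \<Rightarrow> sigma \<Rightarrow> nat" where
  "pair_support ai bi aj bj s t =
    (let Ls = sigma_x s * bi + sigma_z s * ai; Lt = sigma_x t * bj + sigma_z t * aj in
     of_bool (ai + sigma_x s * Lt = 1 \<or> bi + sigma_z s * Lt = 1) +
     of_bool (aj + sigma_x t * Ls = 1 \<or> bj + sigma_z t * Ls = 1))"

lemma Supp_back_act_Cgate:
  fixes B :: "('n::finite) frame"
  assumes "i \<noteq> j"
  shows "Supp p (back_act (Cgate s t i j) B) =
     card ({k. lam (fst B k) p = 1 \<or> lam (snd B k) p = 1} - {i, j}) +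
     pair_support (lam (fst B i) p) (lam (snd B i) p) (lam (fst B j) p) (lam (snd B j) p) s t"
proof -
  define D' where "D' = {k. lam (fst (back_act (Cgate s t i j) B) k) p = 1
                          \<or> lam (snd (back_act (Cgate s t i j) B) k) p = 1}"
  have "D' - {i, j} = {k. lam (fst B k) p = 1 \<or> lam (snd B k) p = 1} - {i, j}"
    by (auto simp: D'_def lam_back_act_Cgate[OF assms] fst_sigma_pauli snd_sigma_pauli)
  moreover have "of_bool (i \<in> D') + of_bool (j \<in> D') =
      pair_support (lam (fst B i) p) (lam (snd B i) p) (lam (fst B j) p) (lam (snd B j) p) s t"
    using assms by (simp add: D'_def lam_back_act_Cgate[OF assms] fst_sigma_pauli snd_sigma_pauli
        frame_lam_sigma_pauli pair_support_def Let_def)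
  ultimately show ?thesis
    using card_eq_card_Diff_pair[of D' i j] assms by (simp add: Supp_def D'_def)
qed

definition sigmas :: "sigma list" where "sigmas = [SX, SY, SZ]"

lemma set_sigmas: "set sigmas = UNIV"
proof -
  have "s \<in> set sigmas" for s by (cases s) (simp_all add: sigmas_def)
  then show ?thesis by blast
qed

lemma card_sigma_pairs:
  "card {(s, t). P s t} = length (filter (\<lambda>(s, t). P s t) (List.product sigmas sigmas))"
proof -
  have "{(s, t). P s t} = set (filter (\<lambda>(s, t). P s t) (List.product sigmas sigmas))"
    by (auto simp: set_sigmas)
  moreover have "distinct (filter (\<lambda>(s, t). P s t) (List.product sigmas sigmas))"
    by (simp add: sigmas_def)
  ultimately show ?thesis by (metis distinct_card)
qed

lemma card_pair_support:
  assumes "(ai, bi) \<noteq> (0, 0)" "(aj, bj) \<noteq> (0, 0)"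
  shows "card {(s, t). pair_support ai bi aj bj s t = 1} = 4
       \<and> card {(s, t). pair_support ai bi aj bj s t = 2} = 5"
  using assms unfolding card_sigma_pairs
  by (cases ai; cases bi; cases aj; cases bj) (simp_all add: sigmas_def pair_support_def)

theorem mainTheorem6:
  fixes B :: "('n::finite) frame" and p :: "'n pauli" and i j :: 'n
  assumes "card (UNIV :: 'n set) \<ge> 2"
    and "is_frame B"
    and "i \<noteq> j"
    and "(lam (fst B i) p, lam (snd B i) p) \<noteq> (0, 0)"
    and "(lam (fst B j) p, lam (snd B j) p) \<noteq> (0, 0)"
  shows "card {(s, t). Supp p (back_act (Cgate s t i j) B) = Supp p B - 1} = 4
       \<and> card {(s, t). Supp p (back_act (Cgate s t i j) B) = Supp p B} = 5"
proof -
  define D where "D = {k. lam (fst B k) p = 1 \<or> lam (snd B k) p = 1}"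
  have "i \<in> D" "j \<in> D"
    using assms(4,5) by (auto simp: D_def)
  then have Supp_B: "Supp p B = card (D - {i, j}) + 2"
    using card_eq_card_Diff_pair[of D i j] assms(3) by (simp add: Supp_def D_def)
  have Supp_after: "Supp p (back_act (Cgate s t i j) B) = card (D - {i, j}) +
      pair_support (lam (fst B i) p) (lam (snd B i) p) (lam (fst B j) p) (lam (snd B j) p) s t" for s t
    using Supp_back_act_Cgate[OF assms(3)] by (simp add: D_def)
  show ?thesis
    using card_pair_support[OF assms(4,5)] by (simp add: Supp_after Supp_B)
qed

end
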